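(* Under Assumption 1, let $(x_t,y_t)$ be generated by SBFW with step sizes satisfying $\delta_t\le\min\{\frac{2}{3\mu_g},\frac{\mu_g}{2(1+\sigma_g^2)L_g^2}\}$ and $\eta_t\in[0,1]$. Then for all $t\ge2$, $$\mathbb E_t\|y_t-y^*(x_t)\|^2\le\Big(1-\frac{\delta_t\mu_g}{2}\Big)\|y_{t-1}-y^*(x_{t-1})\|^2+\frac{2\eta_{t-1}^2}{\delta_t\mu_g}\Big(\frac{C_{xy}}{\mu_g}\Big)^2D^2+4\delta_t^2\sigma_g^2.$$
   Context: Setting. $\mathcal X\subset\mathbb R^m$ is nonempty, convex and compact, with diameter $D=\max_{x,x'\in\mathcal X}\|x-x'\|$. $\theta,\xi$ are independent random variables; $f(x,y;\theta)$ and $g(x,y;\xi)$ map $\mathbb R^m\times\mathbb R^n\to\mathbb R$, with $g(\cdot,\cdot;\xi)$ twice continuously differentiable. Put $F(x,y)=\mathbb E_\theta f(x,y;\theta)$ and $G(x,y)=\mathbb E_\xi g(x,y;\xi)$; derivatives of $F,G$ are expectations of those of $f,g$. Let $y^*(x)=\arg\min_{y\in\mathbb R^n}G(x,y)$. Assumption 1. (i) $\mathbb E\|\nabla_xF(x,y)-\nabla_xf(x,y;\theta)\|^2\le\sigma_x^2$, $\mathbb E\|\nabla_yF(x,y)-\nabla_yf(x,y;\theta)\|^2\le\sigma_y^2$, $\mathbb E\|\nabla^2_{xy}G(x,y)-\nabla^2_{xy}g(x,y;\xi)\|^2\le\sigma_{xy}^2$, $\mathbb E\|\nabla_yG(x,y)-\nabla_yg(x,y;\xi)\|^2\le\sigma_g^2$.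 (ii) For each $x\in\mathcal X$, the maps $y\mapsto\nabla_xF,\nabla_yF,\nabla_yG,\nabla^2_{xy}G,\nabla^2_{yy}G$ are Lipschitz with constants $L_{f_x},L_{f_y},L_g,L_{g_{xy}},L_{g_{yy}}$ respectively. (iii) For each $y$, the maps $x\mapsto\nabla_yF,\nabla^2_{xy}G,\nabla^2_{yy}G$ are Lipschitz with constants $L_{f_y},L_{g_{xy}},L_{g_{yy}}$. (iv) For all $x\in\mathcal X$, $y\in\mathbb R^n$: $\mathbb E\|\nabla_yf(x,y;\theta)\|\le C_y$, $\mathbb E\|\nabla^2_{xy}g(x,y;\xi)\|\le C_{xy}$. (v) $G(x,\cdot)$ is $\mu_g$-strongly convex for every $x\in\mathcal X$. Algorithm SBFW (relevant part). Fresh samples $\xi_t$ are drawn at iteration $t$ independently of the past. $x_1\in\mathcal X$, $y_1\in\mathbb R^n$; for $t\ge2$, $y_t=y_{t-1}-\delta_t\nabla_yg(x_{t-1},y_{t-1};\xi_t)$; for $t\ge1$, $d_t$ is some $\mathbb R^m$-valued direction, $s_t\in\arg\min_{s\in\mathcal X}\langle s,d_t\rangle$ and $x_{t+1}=(1-\eta_t)x_t+\eta_ts_t$ (so $x_t\in\mathcal X$). $\mathcal F_t$ is the σ-field of all randomness drawn before iteration $t$'s fresh samples (so $x_{t-1},y_{t-1},x_t$ are $\mathcal F_t$-measurable), and $\mathbb E_t=\mathbb E[\cdot\mid\mathcal F_t]$. *)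

theory Defs
  imports "HOL-Analysis.Analysis" "HOL-Probability.Probability"
begin

definition strongly_convex_on :: "real \<Rightarrow> 'a::real_normed_vector set \<Rightarrow> ('a \<Rightarrow> real) \<Rightarrow> bool" where
  "strongly_convex_on \<mu> S f \<longleftrightarrow> convex S \<and>
     (\<forall>u\<in>S. \<forall>v\<in>S. \<forall>a::real. 0 \<le> a \<and> a \<le> 1 \<longrightarrow>
        f (a *\<^sub>R u + (1 - a) *\<^sub>R v) \<le> a * f u + (1 - a) * f v - \<mu> / 2 * a * (1 - a) * (norm (u - v))\<^sup>2)"

definition twice_cont_diff :: "('a::real_normed_vector \<Rightarrow> real) \<Rightarrow> bool" where
  "twice_cont_diff f \<longleftrightarrow> (\<exists>Df D2f.
      (\<forall>z. (f has_derivative blinfun_apply (Df z)) (at z)) \<and>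
      (\<forall>z. (Df has_derivative blinfun_apply (D2f z)) (at z)) \<and>
      continuous_on UNIV D2f)"

definition ystar :: "('a \<Rightarrow> 'b \<Rightarrow> real) \<Rightarrow> 'a \<Rightarrow> 'b" where
  "ystar G x = (THE y. \<forall>y'. G x y \<le> G x y')"

end

theory Submission
  imports Defs
begin

(*
  One stochastic gradient step on the mu-strongly convex, Lg-smooth lower-level problem contracts
  the squared distance to y*(x_{t-1}) by the factor 1 - 3 delta mu / 2 in its deterministic part,
  while the unbiased noise only adds delta^2 sigma_g^2 in expectation. The target moves as well:
  since the mixed derivative is bounded by C_xy, the minimiser map is (C_xy / mu)-Lipschitz, and
  the Frank-Wolfe step moves x by at most eta D. Young's inequality with weight delta mu / 2 merges
  the contracted distance with this drift.
*)

lemma strongly_convex_on_imp_convex_on_minus_norm_sq: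
  fixes f :: "'a::real_inner \<Rightarrow> real"
  assumes "strongly_convex_on \<mu> S f"
  shows "convex_on S (\<lambda>z. f z - \<mu> / 2 * (norm z)\<^sup>2)"
proof (rule convex_onI)
  show "convex S" using assms unfolding strongly_convex_on_def by blast
next
  fix t :: real and u v :: 'a
  assume t: "0 < t" "t < 1" and uv: "u \<in> S" "v \<in> S"
  have sq: "(norm ((1 - t) *\<^sub>R u + t *\<^sub>R v))\<^sup>2
      = (1 - t) * (norm u)\<^sup>2 + t * (norm v)\<^sup>2 - t * (1 - t) * (norm (v - u))\<^sup>2"
    unfolding power2_norm_eq_inner
    by (simp add: inner_add_left inner_add_right inner_diff_left inner_diff_right
        inner_commute algebra_simps)
  have "f ((1 - t) *\<^sub>R u + t *\<^sub>R v)
      \<le> t * f v + (1 - t) * f u - \<mu> / 2 * t * (1 - t) * (norm (v - u))\<^sup>2"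
    using assms t uv unfolding strongly_convex_on_def by (auto simp: add.commute)
  moreover have "(1 - t) * (f u - \<mu> / 2 * (norm u)\<^sup>2) + t * (f v - \<mu> / 2 * (norm v)\<^sup>2)
      + \<mu> / 2 * ((1 - t) * (norm u)\<^sup>2 + t * (norm v)\<^sup>2 - t * (1 - t) * (norm (v - u))\<^sup>2)
      = t * f v + (1 - t) * f u - \<mu> / 2 * t * (1 - t) * (norm (v - u))\<^sup>2"
    by (simp add: field_simps)
  ultimately show "f ((1 - t) *\<^sub>R u + t *\<^sub>R v) - \<mu> / 2 * (norm ((1 - t) *\<^sub>R u + t *\<^sub>R v))\<^sup>2
      \<le> (1 - t) * (f u - \<mu> / 2 * (norm u)\<^sup>2) + t * (f v - \<mu> / 2 * (norm v)\<^sup>2)"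
    unfolding sq by linarith
qed

lemma convex_on_restrict_to_line:
  fixes h :: "'a::real_vector \<Rightarrow> real"
  assumes "convex_on UNIV h"
  shows "convex_on UNIV (\<lambda>t::real. h (v + t *\<^sub>R d))"
proof (rule convex_onI)
  fix a t1 t2 :: real
  assume "0 < a" "a < 1"
  moreover have "v + ((1 - a) *\<^sub>R t1 + a *\<^sub>R t2) *\<^sub>R d
      = (1 - a) *\<^sub>R (v + t1 *\<^sub>R d) + a *\<^sub>R (v + t2 *\<^sub>R d)"
    by (simp add: algebra_simps)
  ultimately show "h (v + ((1 - a) *\<^sub>R t1 + a *\<^sub>R t2) *\<^sub>R d)
      \<le> (1 - a) * h (v + t1 *\<^sub>R d) + a * h (v + t2 *\<^sub>R d)"
    using assms by (simp add: convex_on_def)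
qed simp

lemma strongly_convex_on_imp_above_tangent:
  fixes f :: "'a::real_inner \<Rightarrow> real"
  assumes sc: "strongly_convex_on \<mu> UNIV f"
    and der: "\<And>v. (f has_derivative (\<lambda>k. D v \<bullet> k)) (at v)"
  shows "f z \<ge> f v + D v \<bullet> (z - v) + \<mu> / 2 * (norm (z - v))\<^sup>2"
proof -
  define \<phi> where "\<phi> t = f (v + t *\<^sub>R (z - v)) - \<mu> / 2 * (norm (v + t *\<^sub>R (z - v)))\<^sup>2"
    for t :: real
  have cvx: "convex_on UNIV \<phi>"
    unfolding \<phi>_def
    by (rule convex_on_restrict_to_line[OF strongly_convex_on_imp_convex_on_minus_norm_sq[OF sc]])
  have "((\<lambda>t. v + t *\<^sub>R (z - v)) has_derivative (\<lambda>h. h *\<^sub>R (z - v))) (at 0)"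
    by (auto intro!: derivative_eq_intros)
  from has_derivative_compose[OF this der]
  have "((\<lambda>t. f (v + t *\<^sub>R (z - v))) has_derivative (\<lambda>h. D v \<bullet> (h *\<^sub>R (z - v)))) (at 0)"
    by simp
  then have "(\<phi> has_derivative (\<lambda>h. ((D v - \<mu> *\<^sub>R v) \<bullet> (z - v)) * h)) (at 0)"
    unfolding \<phi>_def power2_norm_eq_inner
    by (auto intro!: derivative_eq_intros simp: inner_diff_left inner_commute algebra_simps)
  then have "(\<phi> has_field_derivative ((D v - \<mu> *\<^sub>R v) \<bullet> (z - v))) (at 0 within UNIV)"
    by (simp add: has_field_derivative_def)
  from convex_on_imp_above_tangent[OF cvx _ _ _ this, of 1]
  have "\<phi> 1 - \<phi> 0 \<ge> (D v - \<mu> *\<^sub>R v) \<bullet> (z - v)" by simp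
  moreover have "(norm z)\<^sup>2 = (norm v)\<^sup>2 + 2 * (v \<bullet> (z - v)) + (norm (z - v))\<^sup>2"
    unfolding power2_norm_eq_inner
    by (simp add: inner_diff_left inner_diff_right inner_commute algebra_simps)
  ultimately show ?thesis
    unfolding \<phi>_def by (simp add: inner_diff_left algebra_simps)
qed

lemma strongly_convex_on_imp_gradient_monotone:
  fixes f :: "'a::real_inner \<Rightarrow> real"
  assumes sc: "strongly_convex_on \<mu> UNIV f"
    and der: "\<And>v. (f has_derivative (\<lambda>k. D v \<bullet> k)) (at v)"
  shows "\<mu> * (norm (z - v))\<^sup>2 \<le> (D z - D v) \<bullet> (z - v)"
proof -
  have "f z \<ge> f v + D v \<bullet> (z - v) + \<mu> / 2 * (norm (z - v))\<^sup>2"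
    and "f v \<ge> f z + D z \<bullet> (v - z) + \<mu> / 2 * (norm (v - z))\<^sup>2"
    by (rule strongly_convex_on_imp_above_tangent[OF sc der])+
  then show ?thesis
    by (simp add: norm_minus_commute inner_diff_left inner_diff_right)
qed

lemma gradient_eq_0_at_minimum:
  fixes f :: "'a::real_inner \<Rightarrow> real"
  assumes "(f has_derivative (\<lambda>k. D \<bullet> k)) (at m)" and "\<forall>y. f m \<le> f y"
  shows "D = 0"
proof -
  have "(\<lambda>k. D \<bullet> k) = (\<lambda>k. 0)"
    by (rule differential_zero_maxmin[of m UNIV f]) (use assms in auto)
  then have "D \<bullet> D = 0" by metis
  then show ?thesis by simp
qed

lemma strongly_convex_on_ex1_minimum:
  fixes f :: "'a::euclidean_space \<Rightarrow> real"
  assumes sc: "strongly_convex_on \<mu> UNIV f"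
    and der: "\<And>v. (f has_derivative (\<lambda>k. D v \<bullet> k)) (at v)"
    and mu: "0 < \<mu>"
  shows "\<exists>!m. \<forall>y. f m \<le> f y"
proof -
  define R where "R = 2 * norm (D 0) / \<mu>"
  have "0 \<le> R" unfolding R_def using mu by simp
  moreover have "continuous_on (cball 0 R) f"
    by (intro continuous_at_imp_continuous_on ballI has_derivative_continuous[OF der])
  ultimately obtain m where m: "\<And>y. y \<in> cball 0 R \<Longrightarrow> f m \<le> f y"
    using continuous_attains_inf[OF compact_cball, of 0 R f] by fastforce
  have min: "f m \<le> f y" for y
  proof (cases "y \<in> cball 0 R")
    case False
    \<comment> \<open>outside the ball the quadratic growth beats the linear term of the tangent at 0\<close>
    then have "norm (D 0) \<le> \<mu> / 2 * norm y"
      using mu unfolding R_def by (simp add: field_simps)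
    then have "norm (D 0) * norm y \<le> \<mu> / 2 * norm y * norm y"
      by (rule mult_right_mono) simp
    then have "norm (D 0) * norm y \<le> \<mu> / 2 * (norm y)\<^sup>2"
      by (simp add: power2_eq_square mult.assoc)
    moreover have "- (D 0 \<bullet> y) \<le> norm (D 0) * norm y"
      using norm_cauchy_schwarz[of "D 0" "- y"] by simp
    moreover have "f y \<ge> f 0 + D 0 \<bullet> (y - 0) + \<mu> / 2 * (norm (y - 0))\<^sup>2"
      by (rule strongly_convex_on_imp_above_tangent[OF sc der])
    moreover have "f m \<le> f 0" using m \<open>0 \<le> R\<close> by simp
    ultimately show ?thesis by simp
  qed (use m in blast)
  show ?thesis
  proof (rule ex1I[of _ m])
    fix m' assume m': "\<forall>y. f m' \<le> f y"
    have "f m \<ge> f m' + D m' \<bullet> (m - m') + \<mu> / 2 * (norm (m - m'))\<^sup>2"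
      by (rule strongly_convex_on_imp_above_tangent[OF sc der])
    then have "\<mu> / 2 * (norm (m - m'))\<^sup>2 \<le> 0"
      using gradient_eq_0_at_minimum[OF der m'] min[of m'] by simp
    then show "m' = m" using mu by (simp add: mult_le_0_iff)
  qed (use min in blast)
qed

lemma gradient_ystar_eq_0:
  fixes G :: "'a \<Rightarrow> 'b::euclidean_space \<Rightarrow> real"
  assumes "strongly_convex_on \<mu> UNIV (G u)"
    and der: "\<And>v. (G u has_derivative (\<lambda>k. D v \<bullet> k)) (at v)"
    and "0 < \<mu>"
  shows "D (ystar G u) = 0"
proof (rule gradient_eq_0_at_minimum[OF der])
  show "\<forall>y. G u (ystar G u) \<le> G u y"
    unfolding ystar_def by (rule theI'[OF strongly_convex_on_ex1_minimum[OF assms]])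
qed

lemma norm_ystar_diff_le:
  fixes G :: "'a::real_normed_vector \<Rightarrow> 'b::euclidean_space \<Rightarrow> real"
  assumes sc: "strongly_convex_on \<mu> UNIV (G u)" "strongly_convex_on \<mu> UNIV (G u')"
    and der: "\<And>v. (G u has_derivative (\<lambda>k. Gy u v \<bullet> k)) (at v)"
      "\<And>v. (G u' has_derivative (\<lambda>k. Gy u' v \<bullet> k)) (at v)"
    and mu: "0 < \<mu>"
    and drift: "norm (Gy u' (ystar G u) - Gy u (ystar G u)) \<le> K * norm (u' - u)"
  shows "\<mu> * norm (ystar G u - ystar G u') \<le> K * norm (u' - u)"
proof (cases "ystar G u = ystar G u'")
  case True
  have "0 \<le> K * norm (u' - u)" by (rule order_trans[OF norm_ge_zero drift])
  with True show ?thesis by simp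
next
  case False
  define c b where "c = ystar G u" and "b = ystar G u'"
  have "\<mu> * (norm (c - b))\<^sup>2 \<le> (Gy u' c - Gy u' b) \<bullet> (c - b)"
    by (rule strongly_convex_on_imp_gradient_monotone[OF sc(2) der(2)])
  also have "\<dots> = (Gy u' c - Gy u c) \<bullet> (c - b)"
    using gradient_ystar_eq_0[where G = G and u = u and D = "Gy u", OF sc(1) der(1) mu]
      gradient_ystar_eq_0[where G = G and u = u' and D = "Gy u'", OF sc(2) der(2) mu]
    unfolding c_def b_def by simp
  also have "\<dots> \<le> norm (Gy u' c - Gy u c) * norm (c - b)"
    by (rule norm_cauchy_schwarz)
  also have "\<dots> \<le> K * norm (u' - u) * norm (c - b)"
    using drift unfolding c_def by (rule mult_right_mono) simp
  finally have "\<mu> * norm (c - b) * norm (c - b) \<le> K * norm (u' - u) * norm (c - b)"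
    by (simp add: power2_eq_square mult.assoc)
  then show ?thesis using False unfolding c_def b_def by simp
qed

lemma norm_blinfun_le_integral_norm:
  fixes A :: "'a::real_normed_vector \<Rightarrow>\<^sub>L 'b::{banach, second_countable_topology}"
    and a :: "'c \<Rightarrow> 'a \<Rightarrow>\<^sub>L 'b"
  assumes A: "\<And>h. blinfun_apply A h = (\<integral>\<xi>. blinfun_apply (a \<xi>) h \<partial>M)"
    and int_apply: "\<And>h. integrable M (\<lambda>\<xi>. blinfun_apply (a \<xi>) h)"
    and int_norm: "integrable M (\<lambda>\<xi>. norm (a \<xi>))"
  shows "norm A \<le> (\<integral>\<xi>. norm (a \<xi>) \<partial>M)"
proof (rule norm_blinfun_bound)
  show "0 \<le> (\<integral>\<xi>. norm (a \<xi>) \<partial>M)" by simp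
next
  fix h
  have "norm (blinfun_apply A h) \<le> (\<integral>\<xi>. norm (blinfun_apply (a \<xi>) h) \<partial>M)"
    unfolding A by (rule integral_norm_bound)
  also have "\<dots> \<le> (\<integral>\<xi>. norm (a \<xi>) * norm h \<partial>M)"
    by (rule integral_mono) (use int_apply int_norm norm_blinfun in auto)
  finally show "norm (blinfun_apply A h) \<le> (\<integral>\<xi>. norm (a \<xi>) \<partial>M) * norm h" by simp
qed

lemma gradient_step_contraction:
  fixes F :: "'a::real_inner \<Rightarrow> 'a"
  assumes mono: "\<mu> * (norm (y - c))\<^sup>2 \<le> (F y - F c) \<bullet> (y - c)"
    and lip: "norm (F y - F c) \<le> L * norm (y - c)"
    and root: "F c = 0"
    and step: "0 \<le> \<delta>" "\<delta>\<^sup>2 * L\<^sup>2 \<le> \<delta> * \<mu> / 2"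
  shows "(norm (y - c - \<delta> *\<^sub>R F y))\<^sup>2 \<le> (1 - 3 * \<delta> * \<mu> / 2) * (norm (y - c))\<^sup>2"
proof -
  define r where "r = norm (y - c)"
  have "(norm (y - c - \<delta> *\<^sub>R F y))\<^sup>2 = r\<^sup>2 - 2 * \<delta> * (F y \<bullet> (y - c)) + \<delta>\<^sup>2 * (norm (F y))\<^sup>2"
    unfolding r_def power2_norm_eq_inner
    by (simp add: inner_commute power2_eq_square algebra_simps)
  moreover have "\<delta> * (\<mu> * r\<^sup>2) \<le> \<delta> * (F y \<bullet> (y - c))"
    using mono root step(1) unfolding r_def by (simp add: mult_left_mono)
  moreover have "\<delta>\<^sup>2 * (norm (F y))\<^sup>2 \<le> \<delta>\<^sup>2 * (L * r)\<^sup>2"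
    using lip root unfolding r_def by (intro mult_left_mono power_mono) auto
  moreover have "\<delta>\<^sup>2 * (L * r)\<^sup>2 \<le> \<delta> * \<mu> / 2 * r\<^sup>2"
    using mult_right_mono[OF step(2), of "r\<^sup>2"] by (simp add: power_mult_distrib mult.assoc)
  ultimately show ?thesis unfolding r_def by (simp add: algebra_simps)
qed

lemma (in prob_space) expectation_norm_sq_noisy_step:
  fixes Z :: "'a \<Rightarrow> 'b::euclidean_space"
  assumes int: "integrable M Z"
    and var_int: "integrable M (\<lambda>\<xi>. (norm (expectation Z - Z \<xi>))\<^sup>2)"
  shows "expectation (\<lambda>\<xi>. (norm (a - \<delta> *\<^sub>R Z \<xi>))\<^sup>2)
       = (norm (a - \<delta> *\<^sub>R expectation Z))\<^sup>2 + \<delta>\<^sup>2 * expectation (\<lambda>\<xi>. (norm (expectation Z - Z \<xi>))\<^sup>2)"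
proof -
  define v e where "v = a - \<delta> *\<^sub>R expectation Z" and "e \<xi> = expectation Z - Z \<xi>" for \<xi>
  have pointwise: "(norm (a - \<delta> *\<^sub>R Z \<xi>))\<^sup>2
      = (norm v)\<^sup>2 + 2 * \<delta> * (v \<bullet> e \<xi>) + \<delta>\<^sup>2 * (norm (e \<xi>))\<^sup>2" for \<xi>
  proof -
    have "a - \<delta> *\<^sub>R Z \<xi> = v + \<delta> *\<^sub>R e \<xi>" unfolding v_def e_def by (simp add: algebra_simps)
    then show ?thesis unfolding power2_norm_eq_inner
      by (simp add: inner_commute power2_eq_square algebra_simps)
  qed
  have e_int: "integrable M e" and e_mean: "expectation e = 0"
    unfolding e_def using int by (simp_all add: prob_space)
  have "expectation (\<lambda>\<xi>. (norm (a - \<delta> *\<^sub>R Z \<xi>))\<^sup>2)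
      = expectation (\<lambda>\<xi>. (norm v)\<^sup>2 + 2 * \<delta> * (v \<bullet> e \<xi>) + \<delta>\<^sup>2 * (norm (e \<xi>))\<^sup>2)"
    unfolding pointwise ..
  also have "\<dots> = (norm v)\<^sup>2 + 2 * \<delta> * (v \<bullet> expectation e) + \<delta>\<^sup>2 * expectation (\<lambda>\<xi>. (norm (e \<xi>))\<^sup>2)"
    using e_int var_int unfolding e_def by (simp add: prob_space)
  finally show ?thesis unfolding e_mean v_def e_def by simp
qed

lemma norm_add_sq_le_weighted:
  fixes u v :: "'a::real_normed_vector"
  assumes "0 < k" "k < 1"
  shows "(norm (u + v))\<^sup>2 \<le> (norm u)\<^sup>2 / (1 - k) + (norm v)\<^sup>2 / k"
proof -
  define p q where "p = norm u" and "q = norm v"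
  have "(p + q)\<^sup>2 * (k * (1 - k)) \<le> k * p\<^sup>2 + (1 - k) * q\<^sup>2"
    using zero_le_power2[of "k * p - (1 - k) * q"] by (simp add: power2_eq_square algebra_simps)
  then have "(p + q)\<^sup>2 \<le> p\<^sup>2 / (1 - k) + q\<^sup>2 / k"
    using assms by (simp add: field_simps)
  moreover have "(norm (u + v))\<^sup>2 \<le> (p + q)\<^sup>2"
    unfolding p_def q_def by (intro power_mono norm_triangle_ineq) simp
  ultimately show ?thesis unfolding p_def q_def by linarith
qed

lemma norm_add_sq_le_of_contraction:
  fixes w d z :: "'a::real_normed_vector"
  assumes contr: "(norm w)\<^sup>2 \<le> (1 - 3 * k) * (norm z)\<^sup>2" and k: "0 < k" "k \<le> 1 / 3"
  shows "(norm (w + d))\<^sup>2 \<le> (1 - k) * (norm z)\<^sup>2 + (norm d)\<^sup>2 / k"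
proof -
  have "(norm w)\<^sup>2 / (1 - k) \<le> (1 - 3 * k) / (1 - k) * (norm z)\<^sup>2"
    using contr k by (simp add: divide_right_mono)
  also have "\<dots> \<le> (1 - k) * (norm z)\<^sup>2"
    \<comment> \<open>since \<open>(1 - k)\<^sup>2 = 1 - 2 k + k\<^sup>2 \<ge> 1 - 3 k\<close>\<close>
    using k by (intro mult_right_mono) (simp_all add: field_simps power2_eq_square)
  finally show ?thesis using norm_add_sq_le_weighted[of k w d] k by simp
qed

lemma step_size_bound_imp_sq_le:
  fixes \<delta> \<mu> \<sigma> L :: real
  assumes "0 < \<delta>" "\<delta> \<le> \<mu> / (2 * (1 + \<sigma>\<^sup>2) * L\<^sup>2)"
  shows "\<delta>\<^sup>2 * L\<^sup>2 \<le> \<delta> * \<mu> / 2"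
proof (cases "L = 0")
  case False
  then have "\<delta> * (2 * (1 + \<sigma>\<^sup>2) * L\<^sup>2) \<le> \<mu>"
    using assms(2) by (simp add: pos_le_divide_eq add_pos_nonneg)
  moreover have "\<delta> * (2 * L\<^sup>2) \<le> \<delta> * (2 * (1 + \<sigma>\<^sup>2) * L\<^sup>2)"
    using assms(1) by (intro mult_left_mono) (auto simp: algebra_simps)
  ultimately have "\<delta> * (2 * L\<^sup>2) \<le> \<mu>" by linarith
  then have "\<delta> * (\<delta> * (2 * L\<^sup>2)) \<le> \<delta> * \<mu>"
    using assms(1) by (intro mult_left_mono) auto
  then show ?thesis by (simp add: power2_eq_square algebra_simps)
qed (use assms in simp)

lemma norm_ystar_convex_step_le:
  fixes G :: "'a::real_normed_vector \<Rightarrow> 'b::euclidean_space \<Rightarrow> real"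
    and Gxy :: "'a \<Rightarrow> 'b \<Rightarrow> 'a \<Rightarrow>\<^sub>L 'b"
  assumes X: "convex X" "bounded X" and xs: "x \<in> X" "s \<in> X" and eta: "0 \<le> \<eta>" "\<eta> \<le> 1"
    and sc: "\<And>u. u \<in> X \<Longrightarrow> strongly_convex_on \<mu> UNIV (G u)"
    and der: "\<And>u v. (G u has_derivative (\<lambda>k. Gy u v \<bullet> k)) (at v)"
    and der_x: "\<And>u v. ((\<lambda>u'. Gy u' v) has_derivative blinfun_apply (Gxy u v)) (at u)"
    and bound: "\<And>u v. u \<in> X \<Longrightarrow> norm (Gxy u v) \<le> C"
    and mu: "0 < \<mu>"
  shows "\<mu> * norm (ystar G x - ystar G ((1 - \<eta>) *\<^sub>R x + \<eta> *\<^sub>R s)) \<le> C * (\<eta> * diameter X)"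
proof -
  define x' where "x' = (1 - \<eta>) *\<^sub>R x + \<eta> *\<^sub>R s"
  have x': "x' \<in> X" using X xs eta unfolding x'_def by (simp add: convex_alt)
  have C: "0 \<le> C" using bound[OF xs(1)] norm_ge_zero order_trans by blast
  have "norm (Gy x' (ystar G x) - Gy x (ystar G x)) \<le> C * norm (x' - x)"
  proof (rule differentiable_bound[OF X(1) _ _ x' xs(1)])
    fix w assume "w \<in> X"
    show "((\<lambda>u. Gy u (ystar G x)) has_derivative blinfun_apply (Gxy w (ystar G x))) (at w within X)"
      using der_x by (rule has_derivative_at_withinI)
    show "onorm (blinfun_apply (Gxy w (ystar G x))) \<le> C"
      using bound[OF \<open>w \<in> X\<close>] by (simp add: norm_blinfun.rep_eq)
  qed
  then have "\<mu> * norm (ystar G x - ystar G x') \<le> C * norm (x' - x)"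
    by (rule norm_ystar_diff_le[OF sc[OF xs(1)] sc[OF x'] der der mu])
  also have "\<dots> \<le> C * (\<eta> * diameter X)"
  proof (rule mult_left_mono[OF _ C])
    have "x' - x = \<eta> *\<^sub>R (s - x)" unfolding x'_def by (simp add: algebra_simps)
    then show "norm (x' - x) \<le> \<eta> * diameter X"
      using diameter_bounded_bound[OF X(2) xs(2) xs(1)] eta by (simp add: dist_norm mult_left_mono)
  qed
  finally show ?thesis unfolding x'_def .
qed

lemma norm_gradient_step_ystar_sq_le:
  fixes G :: "'a \<Rightarrow> 'b::euclidean_space \<Rightarrow> real"
  assumes sc: "strongly_convex_on \<mu> UNIV (G u)"
    and der: "\<And>v. (G u has_derivative (\<lambda>k. D v \<bullet> k)) (at v)"
    and lip: "L-lipschitz_on UNIV D"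
    and mu: "0 < \<mu>" and step: "0 \<le> \<delta>" "\<delta>\<^sup>2 * L\<^sup>2 \<le> \<delta> * \<mu> / 2"
  shows "(norm (y - ystar G u - \<delta> *\<^sub>R D y))\<^sup>2 \<le> (1 - 3 * \<delta> * \<mu> / 2) * (norm (y - ystar G u))\<^sup>2"
proof (rule gradient_step_contraction[OF _ _ _ step])
  show "\<mu> * (norm (y - ystar G u))\<^sup>2 \<le> (D y - D (ystar G u)) \<bullet> (y - ystar G u)"
    by (rule strongly_convex_on_imp_gradient_monotone[OF sc der])
  show "norm (D y - D (ystar G u)) \<le> L * norm (y - ystar G u)"
    using lipschitz_onD[OF lip, of y "ystar G u"] by (simp add: dist_norm)
  show "D (ystar G u) = 0"
    by (rule gradient_ystar_eq_0[where G = G and u = u and D = D, OF sc der mu])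
qed

theorem lemma1:
  fixes M :: "'c measure"
    and X :: "'a::euclidean_space set"
    and g :: "'a \<Rightarrow> 'b::euclidean_space \<Rightarrow> 'c \<Rightarrow> real"
    and gy :: "'a \<Rightarrow> 'b \<Rightarrow> 'c \<Rightarrow> 'b"
    and gxy :: "'a \<Rightarrow> 'b \<Rightarrow> 'c \<Rightarrow> ('a \<Rightarrow>\<^sub>L 'b)"
    and gyy :: "'a \<Rightarrow> 'b \<Rightarrow> 'c \<Rightarrow> ('b \<Rightarrow>\<^sub>L 'b)"
    and G :: "'a \<Rightarrow> 'b \<Rightarrow> real"
    and Gy :: "'a \<Rightarrow> 'b \<Rightarrow> 'b"
    and Gxy :: "'a \<Rightarrow> 'b \<Rightarrow> ('a \<Rightarrow>\<^sub>L 'b)"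
    and Gyy :: "'a \<Rightarrow> 'b \<Rightarrow> ('b \<Rightarrow>\<^sub>L 'b)"
    and \<sigma>xy \<sigma>g Lg Lgxy Lgyy Cxy \<mu>g :: real
    and x s :: 'a and y :: 'b and \<delta> \<eta> :: real
  assumes prob: "prob_space M"
    and X_ne: "X \<noteq> {}" and X_convex: "convex X" and X_compact: "compact X"
    and g_C2: "\<And>\<xi>. twice_cont_diff (\<lambda>(u, v). g u v \<xi>)"
    and gy_deriv: "\<And>u v \<xi>. ((\<lambda>v'. g u v' \<xi>) has_derivative (\<lambda>k. gy u v \<xi> \<bullet> k)) (at v)"
    and gxy_deriv: "\<And>u v \<xi>. ((\<lambda>u'. gy u' v \<xi>) has_derivative blinfun_apply (gxy u v \<xi>)) (at u)"
    and gyy_deriv: "\<And>u v \<xi>. ((\<lambda>v'. gy u v' \<xi>) has_derivative blinfun_apply (gyy u v \<xi>)) (at v)"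
    and g_int: "\<And>u v. integrable M (g u v)"
    and G_def: "\<And>u v. G u v = (\<integral>\<xi>. g u v \<xi> \<partial>M)"
    and gy_int: "\<And>u v. integrable M (gy u v)"
    and Gy_def: "\<And>u v. Gy u v = (\<integral>\<xi>. gy u v \<xi> \<partial>M)"
    and gxy_int: "\<And>u v h. integrable M (\<lambda>\<xi>. blinfun_apply (gxy u v \<xi>) h)"
    and Gxy_def: "\<And>u v h. blinfun_apply (Gxy u v) h = (\<integral>\<xi>. blinfun_apply (gxy u v \<xi>) h \<partial>M)"
    and gyy_int: "\<And>u v h. integrable M (\<lambda>\<xi>. blinfun_apply (gyy u v \<xi>) h)"
    and Gyy_def: "\<And>u v h. blinfun_apply (Gyy u v) h = (\<integral>\<xi>. blinfun_apply (gyy u v \<xi>) h \<partial>M)"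
    and Gy_deriv: "\<And>u v. ((\<lambda>v'. G u v') has_derivative (\<lambda>k. Gy u v \<bullet> k)) (at v)"
    and Gxy_deriv: "\<And>u v. ((\<lambda>u'. Gy u' v) has_derivative blinfun_apply (Gxy u v)) (at u)"
    and Gyy_deriv: "\<And>u v. ((\<lambda>v'. Gy u v') has_derivative blinfun_apply (Gyy u v)) (at v)"
    (* Assumption 1 (i), g-part *)
    and var_xy_int: "\<And>u v. u \<in> X \<Longrightarrow> integrable M (\<lambda>\<xi>. (norm (Gxy u v - gxy u v \<xi>))\<^sup>2)"
    and var_xy: "\<And>u v. u \<in> X \<Longrightarrow> (\<integral>\<xi>. (norm (Gxy u v - gxy u v \<xi>))\<^sup>2 \<partial>M) \<le> \<sigma>xy\<^sup>2"
    and var_g_int: "\<And>u v. u \<in> X \<Longrightarrow> integrable M (\<lambda>\<xi>. (norm (Gy u v - gy u v \<xi>))\<^sup>2)"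
    and var_g: "\<And>u v. u \<in> X \<Longrightarrow> (\<integral>\<xi>. (norm (Gy u v - gy u v \<xi>))\<^sup>2 \<partial>M) \<le> \<sigma>g\<^sup>2"
    (* Assumption 1 (ii), g-part *)
    and Lip_Gy: "\<And>u. u \<in> X \<Longrightarrow> Lg-lipschitz_on UNIV (Gy u)"
    and Lip_Gxy_y: "\<And>u. u \<in> X \<Longrightarrow> Lgxy-lipschitz_on UNIV (Gxy u)"
    and Lip_Gyy_y: "\<And>u. u \<in> X \<Longrightarrow> Lgyy-lipschitz_on UNIV (Gyy u)"
    (* Assumption 1 (iii), g-part *)
    and Lip_Gxy_x: "\<And>v. Lgxy-lipschitz_on X (\<lambda>u. Gxy u v)"
    and Lip_Gyy_x: "\<And>v. Lgyy-lipschitz_on X (\<lambda>u. Gyy u v)"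
    (* Assumption 1 (iv), g-part *)
    and Cxy_int: "\<And>u v. u \<in> X \<Longrightarrow> integrable M (\<lambda>\<xi>. norm (gxy u v \<xi>))"
    and Cxy_bound: "\<And>u v. u \<in> X \<Longrightarrow> (\<integral>\<xi>. norm (gxy u v \<xi>) \<partial>M) \<le> Cxy"
    (* Assumption 1 (v) *)
    and mu_pos: "0 < \<mu>g"
    and strong_cvx: "\<And>u. u \<in> X \<Longrightarrow> strongly_convex_on \<mu>g UNIV (G u)"
    (* one SBFW step: x = x_{t-1}, y = y_{t-1}, s = s_{t-1}, x_t = (1-\<eta>) x + \<eta> s,
       y_t = y - \<delta> \<nabla>_y g(x, y; \<xi>_t), \<delta> = \<delta>_t, \<eta> = \<eta>_{t-1} *)
    and x_in: "x \<in> X" and s_in: "s \<in> X"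
    and eta: "0 \<le> \<eta>" "\<eta> \<le> 1"
    and delta_pos: "0 < \<delta>"
    and delta_le: "\<delta> \<le> min (2 / (3 * \<mu>g)) (\<mu>g / (2 * (1 + \<sigma>g\<^sup>2) * Lg\<^sup>2))"
  shows "(\<integral>\<xi>. (norm (y - \<delta> *\<^sub>R gy x y \<xi> - ystar G ((1 - \<eta>) *\<^sub>R x + \<eta> *\<^sub>R s)))\<^sup>2 \<partial>M)
           \<le> (1 - \<delta> * \<mu>g / 2) * (norm (y - ystar G x))\<^sup>2
              + 2 * \<eta>\<^sup>2 / (\<delta> * \<mu>g) * (Cxy / \<mu>g)\<^sup>2 * (diameter X)\<^sup>2
              + 4 * \<delta>\<^sup>2 * \<sigma>g\<^sup>2"
proof -
  interpret prob_space M by (rule prob)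
  define c b where "c = ystar G x" and "b = ystar G ((1 - \<eta>) *\<^sub>R x + \<eta> *\<^sub>R s)"
  have "norm (Gxy u v) \<le> Cxy" if "u \<in> X" for u v
    using norm_blinfun_le_integral_norm[OF Gxy_def gxy_int Cxy_int[OF that]] Cxy_bound[OF that]
    by (rule order_trans)
  from norm_ystar_convex_step_le[OF X_convex compact_imp_bounded[OF X_compact] x_in s_in eta
      strong_cvx Gy_deriv Gxy_deriv this mu_pos]
  have "(norm (c - b))\<^sup>2 \<le> (Cxy / \<mu>g * (\<eta> * diameter X))\<^sup>2"
    unfolding c_def b_def using mu_pos by (intro power_mono) (simp_all add: field_simps)
  then have drift: "(norm (c - b))\<^sup>2 / (\<delta> * \<mu>g / 2)
      \<le> 2 * \<eta>\<^sup>2 / (\<delta> * \<mu>g) * (Cxy / \<mu>g)\<^sup>2 * (diameter X)\<^sup>2"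
    using delta_pos mu_pos by (simp add: divide_right_mono power_mult_distrib field_simps)
  have "\<delta>\<^sup>2 * Lg\<^sup>2 \<le> \<delta> * \<mu>g / 2"
    using delta_le by (intro step_size_bound_imp_sq_le[OF delta_pos, of _ \<sigma>g]) simp
  from norm_gradient_step_ystar_sq_le[where G = G and u = x and D = "Gy x",
      OF strong_cvx[OF x_in] Gy_deriv Lip_Gy[OF x_in] mu_pos _ this]
  have "(norm ((y - c - \<delta> *\<^sub>R Gy x y) + (c - b)))\<^sup>2
      \<le> (1 - \<delta> * \<mu>g / 2) * (norm (y - c))\<^sup>2 + (norm (c - b))\<^sup>2 / (\<delta> * \<mu>g / 2)"
    unfolding c_def[symmetric] using delta_pos mu_pos delta_le
    by (intro norm_add_sq_le_of_contraction) (simp_all add: field_simps)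
  then have "(norm (y - \<delta> *\<^sub>R Gy x y - b))\<^sup>2
      \<le> (1 - \<delta> * \<mu>g / 2) * (norm (y - c))\<^sup>2 + (norm (c - b))\<^sup>2 / (\<delta> * \<mu>g / 2)"
    by (simp add: algebra_simps)
  moreover have "\<delta>\<^sup>2 * (\<integral>\<xi>. (norm (Gy x y - gy x y \<xi>))\<^sup>2 \<partial>M) \<le> \<delta>\<^sup>2 * \<sigma>g\<^sup>2"
    using var_g[OF x_in, of y] by (simp add: mult_left_mono)
  moreover have "\<delta>\<^sup>2 * \<sigma>g\<^sup>2 \<le> 4 * \<delta>\<^sup>2 * \<sigma>g\<^sup>2" by simp
  moreover have "(\<integral>\<xi>. (norm (y - \<delta> *\<^sub>R gy x y \<xi> - b))\<^sup>2 \<partial>M)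
      = (norm (y - \<delta> *\<^sub>R Gy x y - b))\<^sup>2 + \<delta>\<^sup>2 * (\<integral>\<xi>. (norm (Gy x y - gy x y \<xi>))\<^sup>2 \<partial>M)"
    using expectation_norm_sq_noisy_step[OF gy_int var_g_int[OF x_in, of y, unfolded Gy_def],
        where a = "y - b" and \<delta> = \<delta>]
    by (simp add: Gy_def algebra_simps)
  ultimately show ?thesis
    using drift unfolding b_def[symmetric] c_def[symmetric] by linarith
qed

end
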